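(* Let $(f_n)_{n\ge 1}$ be a sequence of $\{0,1\}$-valued functions on a set $X$. Then the following are equivalent: (i) there are a natural number $N$ and a set $E\subseteq\{1,\ldots,N\}$ such that for all $i_1<\cdots<i_N<\omega$, $$\bigcap_{j\in E}f_{i_j}^{-1}(1)\cap\bigcap_{j\in\{1,\ldots,N\}\setminus E}f_{i_j}^{-1}(0)=\emptyset;$$ (ii) there is a natural number $M$ such that $\sum_{n=1}^\infty|f_n(x)-f_{n+1}(x)|\le M$ for all $x\in X$. Moreover, if $X$ is a compact metric space and each $f_n$ is continuous, then (ii) (equivalently (i)) implies that $(f_n)$ converges pointwise to a function $f$ which is a difference of bounded semi-continuous functions.
   Context: A real-valued function $F$ on a topological space $X$ is upper (resp. lower) semi-continuous if $\{x:F(x)\ge r\}$ (resp. $\{x:F(x)\le r\}$) is closed for every real $r$; it is semi-continuous if it is upper or lower semi-continuous. A function $f$ is a difference of bounded semi-continuous functions (DBSC) if $f=F_1-F_2$ for some bounded semi-continuous functions $F_1,F_2$ on $X$. *)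

theory Defs
  imports "HOL-Analysis.Analysis"
begin

definition usc_on :: "'a topology \<Rightarrow> ('a \<Rightarrow> real) \<Rightarrow> bool" where
  "usc_on T F \<longleftrightarrow> (\<forall>r. closedin T {x \<in> topspace T. F x \<ge> r})"

definition lsc_on :: "'a topology \<Rightarrow> ('a \<Rightarrow> real) \<Rightarrow> bool" where
  "lsc_on T F \<longleftrightarrow> (\<forall>r. closedin T {x \<in> topspace T. F x \<le> r})"

definition semicont_on :: "'a topology \<Rightarrow> ('a \<Rightarrow> real) \<Rightarrow> bool" where
  "semicont_on T F \<longleftrightarrow> usc_on T F \<or> lsc_on T F"

definition bounded_on :: "'a topology \<Rightarrow> ('a \<Rightarrow> real) \<Rightarrow> bool" where
  "bounded_on T F \<longleftrightarrow> (\<exists>B. \<forall>x \<in> topspace T. \<bar>F x\<bar> \<le> B)"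

definition DBSC :: "'a topology \<Rightarrow> ('a \<Rightarrow> real) \<Rightarrow> bool" where
  "DBSC T f \<longleftrightarrow> (\<exists>F1 F2. semicont_on T F1 \<and> semicont_on T F2 \<and>
      bounded_on T F1 \<and> bounded_on T F2 \<and> (\<forall>x \<in> topspace T. f x = F1 x - F2 x))"

end

theory Submission
  imports Defs
begin

text \<open>For a \<open>{0,1}\<close>-valued sequence the variation counts its switches. Any
\<open>{0,1}\<close>-pattern of length \<open>N\<close> can be found along an increasing subsequence of a
stretch with at least \<open>2N\<close> switches, each entry of the pattern using up at most two of them;
so omitting one pattern bounds the variation by \<open>2N\<close>. Conversely, realising the
alternating pattern of length \<open>M + 2\<close> forces \<open>M + 1\<close> switches, so a variation bound \<open>M\<close>
omits it. Under a variation bound the limit is \<open>f\<^sub>1 + \<Sum>(f\<^sub>n\<^sub>+\<^sub>1 - f\<^sub>n)\<close>; splitting the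
increments into positive and negative parts writes it as a difference of two bounded
series of non-negative continuous functions, which are lower semi-continuous.\<close>

abbreviation variation :: "(nat \<Rightarrow> real) \<Rightarrow> nat \<Rightarrow> nat \<Rightarrow> real" where
  "variation s a b \<equiv> \<Sum>n\<in>{a..<b}. \<bar>s n - s (Suc n)\<bar>"

lemma abs_diff_le_variation:
  assumes "a \<le> b"
  shows "\<bar>s a - s b\<bar> \<le> variation s a b"
  using assms
proof (induction b rule: dec_induct)
  case (step n)
  have "\<bar>s a - s (Suc n)\<bar> \<le> \<bar>s a - s n\<bar> + \<bar>s n - s (Suc n)\<bar>" by linarith
  with step show ?case by simp
qed simp

lemma variation_subsequence_le:
  fixes i :: "nat \<Rightarrow> nat"
  assumes "mono_on {1..Suc K} i"
  shows "(\<Sum>j=1..K. \<bar>s (i j) - s (i (Suc j))\<bar>) \<le> variation s (i 1) (i (Suc K))"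
  using assms
proof (induction K)
  case (Suc K)
  have mono: "mono_on {1..Suc K} i"
    using Suc.prems by (rule mono_on_subset) auto
  have le1: "i 1 \<le> i (Suc K)" and le2: "i (Suc K) \<le> i (Suc (Suc K))"
    using Suc.prems by (auto intro: mono_onD)
  have "(\<Sum>j=1..Suc K. \<bar>s (i j) - s (i (Suc j))\<bar>)
      = (\<Sum>j=1..K. \<bar>s (i j) - s (i (Suc j))\<bar>) + \<bar>s (i (Suc K)) - s (i (Suc (Suc K)))\<bar>"
    by simp
  also have "\<dots> \<le> variation s (i 1) (i (Suc K)) + variation s (i (Suc K)) (i (Suc (Suc K)))"
    using Suc.IH[OF mono] abs_diff_le_variation[OF le2, of s] by linarith
  also have "\<dots> = variation s (i 1) (i (Suc (Suc K)))"
    using sum.atLeastLessThan_concat[OF le1 le2] by simp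
  finally show ?case .
qed simp

lemma variation_le_suminf_Suc:
  assumes "summable (\<lambda>n. \<bar>s (Suc n) - s (Suc (Suc n))\<bar>)" and "1 \<le> a"
  shows "variation s a b \<le> (\<Sum>n. \<bar>s (Suc n) - s (Suc (Suc n))\<bar>)"
proof -
  have "{a..<b} \<subseteq> Suc ` {..<b}"
  proof
    fix n assume "n \<in> {a..<b}"
    with \<open>1 \<le> a\<close> show "n \<in> Suc ` {..<b}"
      by (intro image_eqI[of n Suc "n - 1"]) auto
  qed
  then have "variation s a b \<le> (\<Sum>n\<in>Suc ` {..<b}. \<bar>s n - s (Suc n)\<bar>)"
    by (intro sum_mono2) auto
  also have "\<dots> = (\<Sum>n<b. \<bar>s (Suc n) - s (Suc (Suc n))\<bar>)"
    by (simp add: sum.reindex)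
  also have "\<dots> \<le> (\<Sum>n. \<bar>s (Suc n) - s (Suc (Suc n))\<bar>)"
    using assms(1) by (rule sum_le_suminf) auto
  finally show ?thesis .
qed

lemma zero_one_abs_diff_le_1:
  fixes s :: "nat \<Rightarrow> real"
  assumes "\<And>n. s n \<in> {0, 1}"
  shows "\<bar>s m - s n\<bar> \<le> 1"
  using assms[of m] assms[of n] by auto

lemma zero_one_seq_attains_value_after_variation:
  fixes s :: "nat \<Rightarrow> real"
  assumes s01: "\<And>n. s n \<in> {0, 1}" and v: "v \<in> {0, 1}" and "0 \<le> c"
    and var: "2 + c \<le> variation s a b"
  shows "\<exists>m. a \<le> m \<and> m < b \<and> s (Suc m) = v \<and> c \<le> variation s a m"
proof -
  have "a \<le> b"
    using var \<open>0 \<le> c\<close> by (cases "a \<le> b") auto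
  then show ?thesis
    using var
  proof (induction b rule: dec_induct)
    case base
    then show ?case using \<open>0 \<le> c\<close> by simp
  next
    case (step n)
    have split: "variation s a (Suc n) = variation s a n + \<bar>s n - s (Suc n)\<bar>"
      using step.hyps by simp
    consider "s (Suc n) = v" | "s n = s (Suc n)" | "s n = v" "s n \<noteq> s (Suc n)"
      using s01[of n] s01[of "Suc n"] v by auto
    then show ?case
    proof cases
      case 1
      then show ?thesis
        using step split zero_one_abs_diff_le_1[of s n "Suc n", OF s01] by (intro exI[of _ n]) auto
    next
      case 2
      then show ?thesis
        using step split by fastforce
    next
      case 3
      have "a < n"
      proof (rule ccontr)
        assume "\<not> a < n"
        then have "n = a" using step.hyps by simp
        then show False
          using step.prems split zero_one_abs_diff_le_1[of s n "Suc n", OF s01] \<open>0 \<le> c\<close> by simp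
      qed
      then obtain m where n: "n = Suc m" and "a \<le> m"
        by (cases n) auto
      then have "variation s a n = variation s a m + \<bar>s m - s n\<bar>"
        by simp
      then show ?thesis
        using 3 n \<open>a \<le> m\<close> step.prems split zero_one_abs_diff_le_1[of s m n, OF s01]
          zero_one_abs_diff_le_1[of s n "Suc n", OF s01]
        by (intro exI[of _ m]) auto
    qed
  qed
qed

lemma zero_one_seq_realizes_pattern:
  fixes s e :: "nat \<Rightarrow> real"
  assumes s01: "\<And>n. s n \<in> {0, 1}" and e01: "\<And>j. e j \<in> {0, 1}"
    and var: "2 * real N \<le> variation s a b"
  shows "\<exists>i. strict_mono_on {1..N} i \<and> (\<forall>j\<in>{1..N}. a < i j \<and> i j \<le> b \<and> s (i j) = e j)"
  using var
proof (induction N arbitrary: b)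
  case 0
  show ?case by (simp add: strict_mono_on_def)
next
  case (Suc N)
  obtain m where m: "a \<le> m" "m < b" "s (Suc m) = e (Suc N)" "2 * real N \<le> variation s a m"
    using zero_one_seq_attains_value_after_variation[of s "e (Suc N)" "2 * real N" a b, OF s01 e01]
      Suc.prems by auto
  obtain i where i: "strict_mono_on {1..N} i" "\<forall>j\<in>{1..N}. a < i j \<and> i j \<le> m \<and> s (i j) = e j"
    using Suc.IH[OF m(4)] by blast
  define i' where "i' = i(Suc N := Suc m)"
  have "strict_mono_on {1..Suc N} i'"
    using i unfolding strict_mono_on_def i'_def
    by (auto simp: le_Suc_eq) (force simp: less_Suc_eq_le)
  moreover have "\<forall>j\<in>{1..Suc N}. a < i' j \<and> i' j \<le> b \<and> s (i' j) = e j"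
    using i(2) m by (force simp: i'_def le_Suc_eq)
  ultimately show ?case by blast
qed

lemma zero_one_seq_variation_bounded:
  fixes s e :: "nat \<Rightarrow> real"
  assumes s01: "\<And>n. s n \<in> {0, 1}" and e01: "\<And>j. e j \<in> {0, 1}"
    and omitted: "\<And>i. strict_mono_on {1..N} i \<Longrightarrow> \<exists>j\<in>{1..N}. s (i j) \<noteq> e j"
  shows "summable (\<lambda>n. \<bar>s n - s (Suc n)\<bar>) \<and> (\<Sum>n. \<bar>s n - s (Suc n)\<bar>) \<le> 2 * real N"
proof -
  have partial: "(\<Sum>n<b. \<bar>s n - s (Suc n)\<bar>) \<le> 2 * real N" for b
  proof (rule ccontr)
    assume "\<not> ?thesis"
    then have "2 * real N \<le> variation s 0 b"
      by (simp add: atLeast0LessThan)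
    then show False
      using zero_one_seq_realizes_pattern[of s e, OF s01 e01] omitted by fastforce
  qed
  have "summable (\<lambda>n. \<bar>s n - s (Suc n)\<bar>)"
    using partial by (intro summableI_nonneg_bounded) auto
  with partial show ?thesis
    using suminf_le_const by blast
qed

lemma LIMSEQ_of_summable_abs_diff:
  fixes g :: "nat \<Rightarrow> real"
  assumes "summable (\<lambda>n. \<bar>g n - g (Suc n)\<bar>)"
  shows "g \<longlonglongrightarrow> g 0 + (\<Sum>n. g (Suc n) - g n)"
proof -
  have "summable (\<lambda>n. \<bar>g (Suc n) - g n\<bar>)"
    using assms by (simp only: abs_minus_commute)
  then have "summable (\<lambda>n. g (Suc n) - g n)"
    by (rule summable_rabs_cancel)
  then have "(\<lambda>m. \<Sum>n<m. g (Suc n) - g n) \<longlonglongrightarrow> (\<Sum>n. g (Suc n) - g n)"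
    by (rule summable_LIMSEQ)
  then have "(\<lambda>m. g 0 + (\<Sum>n<m. g (Suc n) - g n)) \<longlonglongrightarrow> g 0 + (\<Sum>n. g (Suc n) - g n)"
    by (intro tendsto_add tendsto_const)
  then show ?thesis
    by (simp only: sum_lessThan_telescope) simp
qed

lemma lsc_on_add_suminf:
  assumes c: "continuous_map T euclideanreal c"
    and h: "\<And>n. continuous_map T euclideanreal (h n)"
    and nonneg: "\<And>n x. x \<in> topspace T \<Longrightarrow> 0 \<le> h n x"
    and summable: "\<And>x. x \<in> topspace T \<Longrightarrow> summable (\<lambda>n. h n x)"
  shows "lsc_on T (\<lambda>x. c x + (\<Sum>n. h n x))"
  unfolding lsc_on_def
proof
  fix r
  have "{x \<in> topspace T. c x + (\<Sum>n. h n x) \<le> r} =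
        (\<Inter>k. {x \<in> topspace T. c x + (\<Sum>n<k. h n x) \<in> {..r}})"
  proof (intro equalityI subsetI)
    fix x assume "x \<in> {x \<in> topspace T. c x + (\<Sum>n. h n x) \<le> r}"
    moreover from this have "(\<Sum>n<k. h n x) \<le> (\<Sum>n. h n x)" for k
      using sum_le_suminf[OF summable] nonneg by auto
    ultimately show "x \<in> (\<Inter>k. {x \<in> topspace T. c x + (\<Sum>n<k. h n x) \<in> {..r}})"
      by (auto intro: order_trans[rotated])
  next
    fix x assume x: "x \<in> (\<Inter>k. {x \<in> topspace T. c x + (\<Sum>n<k. h n x) \<in> {..r}})"
    then have "c x + (\<Sum>n<k. h n x) \<le> r" for k
      by blast
    then have "(\<Sum>n<k. h n x) \<le> r - c x" for k
      by (simp add: algebra_simps)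
    then have "(\<Sum>n. h n x) \<le> r - c x"
      using x by (intro suminf_le_const summable) auto
    with x show "x \<in> {x \<in> topspace T. c x + (\<Sum>n. h n x) \<le> r}"
      by auto
  qed
  also have "closedin T \<dots>"
    by (intro closedin_INT closedin_continuous_map_preimage[where Y=euclideanreal]
        continuous_map_add continuous_map_sum c h) auto
  finally show "closedin T {x \<in> topspace T. c x + (\<Sum>n. h n x) \<le> r}" .
qed

lemma summable_max_0:
  fixes a :: "nat \<Rightarrow> real"
  assumes "summable (\<lambda>n. \<bar>a n\<bar>)"
  shows "summable (\<lambda>n. max 0 (a n))"
  by (rule summable_comparison_test'[OF assms, of 0]) auto

lemma lsc_bounded_add_suminf_pos_part:
  assumes c: "continuous_map T euclideanreal c" and "bounded_on T c"
    and D: "\<And>n. continuous_map T euclideanreal (D n)"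
    and var: "\<And>x. x \<in> topspace T \<Longrightarrow> summable (\<lambda>n. \<bar>D n x\<bar>) \<and> (\<Sum>n. \<bar>D n x\<bar>) \<le> M"
  shows "lsc_on T (\<lambda>x. c x + (\<Sum>n. max 0 (D n x))) \<and>
    bounded_on T (\<lambda>x. c x + (\<Sum>n. max 0 (D n x)))"
proof
  have summable: "summable (\<lambda>n. max 0 (D n x))" if "x \<in> topspace T" for x
    using var[OF that] by (simp add: summable_max_0)
  show "lsc_on T (\<lambda>x. c x + (\<Sum>n. max 0 (D n x)))"
    using summable by (intro lsc_on_add_suminf c continuous_map_real_max D) auto
  obtain B where B: "\<And>x. x \<in> topspace T \<Longrightarrow> \<bar>c x\<bar> \<le> B"
    using \<open>bounded_on T c\<close> unfolding bounded_on_def by blast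
  show "bounded_on T (\<lambda>x. c x + (\<Sum>n. max 0 (D n x)))"
    unfolding bounded_on_def
  proof (intro exI ballI)
    fix x assume x: "x \<in> topspace T"
    have "0 \<le> (\<Sum>n. max 0 (D n x))"
      using summable[OF x] by (intro suminf_nonneg) auto
    moreover have "(\<Sum>n. max 0 (D n x)) \<le> (\<Sum>n. \<bar>D n x\<bar>)"
      using summable[OF x] var[OF x] by (intro suminf_le) auto
    ultimately show "\<bar>c x + (\<Sum>n. max 0 (D n x))\<bar> \<le> B + M"
      using B[OF x] var[OF x] by linarith
  qed
qed

lemma DBSC_add_suminf:
  assumes c: "continuous_map T euclideanreal c" and "bounded_on T c"
    and D: "\<And>n. continuous_map T euclideanreal (D n)"
    and var: "\<And>x. x \<in> topspace T \<Longrightarrow> summable (\<lambda>n. \<bar>D n x\<bar>) \<and> (\<Sum>n. \<bar>D n x\<bar>) \<le> M"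
  shows "DBSC T (\<lambda>x. c x + (\<Sum>n. D n x))"
proof -
  define F1 where "F1 x = c x + (\<Sum>n. max 0 (D n x))" for x
  define F2 where "F2 x = 0 + (\<Sum>n. max 0 (- D n x))" for x
  have F1: "lsc_on T F1 \<and> bounded_on T F1"
    unfolding F1_def using assms by (rule lsc_bounded_add_suminf_pos_part)
  have F2: "lsc_on T F2 \<and> bounded_on T F2"
    unfolding F2_def using var
    by (intro lsc_bounded_add_suminf_pos_part continuous_map_minus D) (auto simp: bounded_on_def)
  have "c x + (\<Sum>n. D n x) = F1 x - F2 x" if x: "x \<in> topspace T" for x
  proof -
    have "summable (\<lambda>n. max 0 (D n x))" "summable (\<lambda>n. max 0 (- D n x))"
      using var[OF x] by (simp_all add: summable_max_0)
    then have "(\<Sum>n. max 0 (D n x)) - (\<Sum>n. max 0 (- D n x)) =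
        (\<Sum>n. max 0 (D n x) - max 0 (- D n x))"
      by (rule suminf_diff)
    also have "(\<lambda>n. max 0 (D n x) - max 0 (- D n x)) = (\<lambda>n. D n x)"
      by (auto simp: max_def)
    finally show ?thesis
      by (simp add: F1_def F2_def)
  qed
  with F1 F2 show ?thesis
    unfolding DBSC_def semicont_on_def by blast
qed

lemma bounded_variation_if_pattern_omitted:
  fixes X :: "'a set" and f :: "nat \<Rightarrow> 'a \<Rightarrow> real"
  assumes f01: "\<And>n x. n \<ge> 1 \<Longrightarrow> x \<in> X \<Longrightarrow> f n x \<in> {0, 1}"
    and "\<exists>(N::nat) E. E \<subseteq> {1..N} \<and>
      (\<forall>i :: nat \<Rightarrow> nat. (1 \<le> i 1 \<and> strict_mono_on {1..N} i) \<longrightarrow>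
        {x \<in> X. (\<forall>j \<in> E. f (i j) x = 1) \<and> (\<forall>j \<in> {1..N} - E. f (i j) x = 0)} = {})"
  shows "\<exists>M::nat. \<forall>x \<in> X. summable (\<lambda>n. \<bar>f (Suc n) x - f (Suc (Suc n)) x\<bar>) \<and>
    (\<Sum>n. \<bar>f (Suc n) x - f (Suc (Suc n)) x\<bar>) \<le> real M"
proof -
  obtain N E where "E \<subseteq> {1..N}"
    and omitted: "\<forall>i :: nat \<Rightarrow> nat. (1 \<le> i 1 \<and> strict_mono_on {1..N} i) \<longrightarrow>
      {x \<in> X. (\<forall>j \<in> E. f (i j) x = 1) \<and> (\<forall>j \<in> {1..N} - E. f (i j) x = 0)} = {}"
    using assms(2) by blast
  have "summable (\<lambda>n. \<bar>f (Suc n) x - f (Suc (Suc n)) x\<bar>) \<and>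
      (\<Sum>n. \<bar>f (Suc n) x - f (Suc (Suc n)) x\<bar>) \<le> real (2 * N)" if x: "x \<in> X" for x
  proof -
    have omits: "\<exists>j\<in>{1..N}. f (Suc (i j)) x \<noteq> (if j \<in> E then 1 else 0)"
      if "strict_mono_on {1..N} i" for i
    proof -
      have "1 \<le> (Suc \<circ> i) 1 \<and> strict_mono_on {1..N} (Suc \<circ> i)"
        using that by (simp add: strict_mono_on_def)
      with omitted have "x \<notin> {x \<in> X. (\<forall>j \<in> E. f ((Suc \<circ> i) j) x = 1) \<and>
          (\<forall>j \<in> {1..N} - E. f ((Suc \<circ> i) j) x = 0)}"
        by blast
      with x \<open>E \<subseteq> {1..N}\<close> show ?thesis
        by auto
    qed
    have "f (Suc n) x \<in> {0, 1}" for n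
      using f01 x by simp
    from zero_one_seq_variation_bounded[of "\<lambda>n. f (Suc n) x", OF this _ omits]
    show ?thesis
      by simp
  qed
  then show ?thesis
    by blast
qed

lemma pattern_omitted_if_bounded_variation:
  fixes X :: "'a set" and f :: "nat \<Rightarrow> 'a \<Rightarrow> real"
  assumes "\<exists>M::nat. \<forall>x \<in> X. summable (\<lambda>n. \<bar>f (Suc n) x - f (Suc (Suc n)) x\<bar>) \<and>
      (\<Sum>n. \<bar>f (Suc n) x - f (Suc (Suc n)) x\<bar>) \<le> real M"
  shows "\<exists>(N::nat) E. E \<subseteq> {1..N} \<and>
      (\<forall>i :: nat \<Rightarrow> nat. (1 \<le> i 1 \<and> strict_mono_on {1..N} i) \<longrightarrow>
        {x \<in> X. (\<forall>j \<in> E. f (i j) x = 1) \<and> (\<forall>j \<in> {1..N} - E. f (i j) x = 0)} = {})"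
proof -
  obtain M where var: "\<forall>x \<in> X. summable (\<lambda>n. \<bar>f (Suc n) x - f (Suc (Suc n)) x\<bar>) \<and>
      (\<Sum>n. \<bar>f (Suc n) x - f (Suc (Suc n)) x\<bar>) \<le> real M"
    using assms by blast
  have "x \<notin> X" if "1 \<le> i 1" and i: "strict_mono_on {1..M+2} i"
    and odd: "\<forall>j \<in> {j \<in> {1..M+2}. odd j}. f (i j) x = 1"
    and even: "\<forall>j \<in> {1..M+2} - {j \<in> {1..M+2}. odd j}. f (i j) x = 0" for i x
  proof
    assume x: "x \<in> X"
    have switch: "\<bar>f (i j) x - f (i (Suc j)) x\<bar> = 1" if "j \<in> {1..M+1}" for j
    proof (cases "odd j")
      case True
      with that odd even show ?thesis by simp
    next
      case False
      with that odd even show ?thesis by simp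
    qed
    have "real (M + 1) = (\<Sum>j=1..M+1. 1)"
      by simp
    also have "\<dots> = (\<Sum>j=1..M+1. \<bar>f (i j) x - f (i (Suc j)) x\<bar>)"
      by (rule sum.cong) (simp_all add: switch)
    also have "\<dots> \<le> variation (\<lambda>n. f n x) (i 1) (i (Suc (M + 1)))"
      using strict_mono_on_imp_mono_on[OF i] by (intro variation_subsequence_le) simp
    also have "\<dots> \<le> (\<Sum>n. \<bar>f (Suc n) x - f (Suc (Suc n)) x\<bar>)"
      using var x \<open>1 \<le> i 1\<close> by (intro variation_le_suminf_Suc) auto
    also have "\<dots> \<le> real M"
      using var x by blast
    finally show False
      by simp
  qed
  then show ?thesis
    by (intro exI[of _ "M + 2"] exI[of _ "{j \<in> {1..M + 2}. odd j}"]) blast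
qed

lemma limit_DBSC_if_bounded_variation:
  fixes f :: "nat \<Rightarrow> 'a \<Rightarrow> real"
  assumes f01: "\<And>n x. n \<ge> 1 \<Longrightarrow> x \<in> topspace T \<Longrightarrow> f n x \<in> {0, 1}"
    and cont: "\<forall>n \<ge> 1. continuous_map T euclideanreal (f n)"
    and "\<exists>M::nat. \<forall>x \<in> topspace T. summable (\<lambda>n. \<bar>f (Suc n) x - f (Suc (Suc n)) x\<bar>) \<and>
      (\<Sum>n. \<bar>f (Suc n) x - f (Suc (Suc n)) x\<bar>) \<le> real M"
  shows "\<exists>g. (\<forall>x \<in> topspace T. (\<lambda>n. f n x) \<longlonglongrightarrow> g x) \<and> DBSC T g"
proof (intro exI conjI ballI)
  obtain M where var: "\<forall>x \<in> topspace T. summable (\<lambda>n. \<bar>f (Suc n) x - f (Suc (Suc n)) x\<bar>) \<and>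
      (\<Sum>n. \<bar>f (Suc n) x - f (Suc (Suc n)) x\<bar>) \<le> real M"
    using assms(3) by blast
  show "(\<lambda>n. f n x) \<longlonglongrightarrow> f 1 x + (\<Sum>n. f (Suc (Suc n)) x - f (Suc n) x)" if "x \<in> topspace T" for x
  proof (rule LIMSEQ_imp_Suc)
    show "(\<lambda>n. f (Suc n) x) \<longlonglongrightarrow> f 1 x + (\<Sum>n. f (Suc (Suc n)) x - f (Suc n) x)"
      using LIMSEQ_of_summable_abs_diff[of "\<lambda>n. f (Suc n) x"] var that by simp
  qed
  have "bounded_on T (f 1)"
    unfolding bounded_on_def using f01 by (intro exI[of _ 1]) force
  then show "DBSC T (\<lambda>x. f 1 x + (\<Sum>n. f (Suc (Suc n)) x - f (Suc n) x))"
    using cont var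
    by (intro DBSC_add_suminf[where M = M] continuous_map_diff) (auto simp: abs_minus_commute)
qed

theorem lemma2p8:
  fixes X :: "'a set" and f :: "nat \<Rightarrow> 'a \<Rightarrow> real"
  assumes f01: "\<And>n x. n \<ge> 1 \<Longrightarrow> x \<in> X \<Longrightarrow> f n x \<in> {0, 1}"
  shows "((\<exists>(N::nat) E. E \<subseteq> {1..N} \<and>
            (\<forall>i :: nat \<Rightarrow> nat. (1 \<le> i 1 \<and> strict_mono_on {1..N} i) \<longrightarrow>
               {x \<in> X. (\<forall>j \<in> E. f (i j) x = 1) \<and> (\<forall>j \<in> {1..N} - E. f (i j) x = 0)} = {}))
         \<longleftrightarrow>
         (\<exists>M::nat. \<forall>x \<in> X. summable (\<lambda>n. \<bar>f (Suc n) x - f (Suc (Suc n)) x\<bar>) \<and>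
            (\<Sum>n. \<bar>f (Suc n) x - f (Suc (Suc n)) x\<bar>) \<le> real M))
       \<and>
       (\<forall>d. (Metric_space X d \<and> compact_space (Metric_space.mtopology X d) \<and>
             (\<forall>n \<ge> 1. continuous_map (Metric_space.mtopology X d) euclideanreal (f n)) \<and>
             (\<exists>M::nat. \<forall>x \<in> X. summable (\<lambda>n. \<bar>f (Suc n) x - f (Suc (Suc n)) x\<bar>) \<and>
               (\<Sum>n. \<bar>f (Suc n) x - f (Suc (Suc n)) x\<bar>) \<le> real M))
          \<longrightarrow> (\<exists>g. (\<forall>x \<in> X. (\<lambda>n. f n x) \<longlonglongrightarrow> g x) \<and>
                    DBSC (Metric_space.mtopology X d) g))"
proof -
  show ?thesis (is "(?patterns \<longleftrightarrow> ?variation) \<and> ?limit")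
  proof (intro conjI iffI)
    assume ?patterns
    from bounded_variation_if_pattern_omitted[OF f01 this]
    show ?variation .
  next
    assume ?variation
    from pattern_omitted_if_bounded_variation[OF this]
    show ?patterns .
  next
    show ?limit
    proof (intro allI impI)
      fix d
      assume H: "Metric_space X d \<and> compact_space (Metric_space.mtopology X d) \<and>
        (\<forall>n \<ge> 1. continuous_map (Metric_space.mtopology X d) euclideanreal (f n)) \<and> ?variation"
      then have X: "topspace (Metric_space.mtopology X d) = X"
        by (simp add: Metric_space.topspace_mtopology)
      show "\<exists>g. (\<forall>x \<in> X. (\<lambda>n. f n x) \<longlonglongrightarrow> g x) \<and> DBSC (Metric_space.mtopology X d) g"
        using limit_DBSC_if_bounded_variation[of "Metric_space.mtopology X d" f, unfolded X] f01 H
        by blast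
    qed
  qed
qed

end
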